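(* Let $L$ be a finite lattice. Then $\mathsf{C}(L)=\mathsf{Pol}_{0,1}(L)$ if and only if the only tolerances on $L$ are $\mathrm{id}_L$ and $L^2$.
   Context: $L$ has bounds $0,1$; $\mathrm{id}_L=\{(x,x):x\in L\}$. An $n$-ary aggregation function on $L$ ($n\ge1$) is a map $A:L^n\to L$, nondecreasing with respect to the componentwise order, with $A(0,\dots,0)=0$ and $A(1,\dots,1)=1$; $\mathsf{C}(L)$ is the set of all aggregation functions on $L$. Polynomials on $L$ are functions $L^n\to L$ obtained from projections and constant functions by finitely many pointwise joins and meets; $\mathsf{Pol}_{0,1}(L)$ is the set of polynomials $p$ with $p(0,\dots,0)=0$ and $p(1,\dots,1)=1$. A tolerance on $L$ is a reflexive, symmetric binary relation $T$ on $L$ such that $(a,b),(c,d)\in T$ imply $(a\vee c,b\vee d)\in T$ and $(a\wedge c,b\wedge d)\in T$. *)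

theory Defs
  imports Main
begin

text \<open>An n-ary operation on L is represented by a function on lists; only its
values on lists of length n are relevant.\<close>

definition aggregation :: "nat \<Rightarrow> ('a::bounded_lattice list \<Rightarrow> 'a) \<Rightarrow> bool" where
  "aggregation n A \<longleftrightarrow>
     (\<forall>xs ys. length xs = n \<and> length ys = n \<and> list_all2 (\<le>) xs ys \<longrightarrow> A xs \<le> A ys)
     \<and> A (replicate n bot) = bot \<and> A (replicate n top) = top"

inductive_set polys :: "nat \<Rightarrow> ('a::lattice list \<Rightarrow> 'a) set" for n :: nat where
  proj: "i < n \<Longrightarrow> (\<lambda>xs. xs ! i) \<in> polys n"
| const: "(\<lambda>xs. c) \<in> polys n"
| join: "p \<in> polys n \<Longrightarrow> q \<in> polys n \<Longrightarrow> (\<lambda>xs. sup (p xs) (q xs)) \<in> polys n"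
| meet: "p \<in> polys n \<Longrightarrow> q \<in> polys n \<Longrightarrow> (\<lambda>xs. inf (p xs) (q xs)) \<in> polys n"

definition pol01 :: "nat \<Rightarrow> ('a::bounded_lattice list \<Rightarrow> 'a) \<Rightarrow> bool" where
  "pol01 n f \<longleftrightarrow> (\<exists>p\<in>polys n. \<forall>xs. length xs = n \<longrightarrow> f xs = p xs)
     \<and> f (replicate n bot) = bot \<and> f (replicate n top) = top"

definition tolerance :: "('a::lattice \<times> 'a) set \<Rightarrow> bool" where
  "tolerance T \<longleftrightarrow> refl T \<and> sym T \<and>
     (\<forall>a b c d. (a, b) \<in> T \<and> (c, d) \<in> T \<longrightarrow>
        (sup a c, sup b d) \<in> T \<and> (inf a c, inf b d) \<in> T)"

end

theory Submission
  imports Defs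
begin

text \<open>If the only tolerances are trivial, then for u \<noteq> v the tolerance generated by (u, v), which
consists of the pairs (p(u,v), p(v,u)) for binary polynomials p, is all of L x L. Hence some binary
polynomial maps (u, v) to 0 and (v, u) to 1. Applied to u = x, v = x \<squnion> c with c \<not>\<le> x this yields a
unary polynomial that is 0 at x and 1 above c; the meet of these over all x with c \<not>\<le> x is the
threshold function [c \<le> x]. On a finite lattice every monotone f is the join over all tuples a of
f(a) \<sqinter> [a \<le> x], a polynomial. Conversely, polynomials preserve every tolerance T; if T contains a
pair c < d, the threshold [d \<le> x], which is an aggregation function, would have to be a polynomial,
forcing (0, 1) \<in> T and then T = L x L.\<close>

lemma polys_subst:
  assumes "p \<in> polys n" "\<forall>i<n. g i \<in> polys m"
  shows "(\<lambda>xs. p (map (\<lambda>i. g i xs) [0..<n])) \<in> polys m"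
  using assms(1)
proof induction
  case (proj i)
  then show ?case using assms(2) by simp
next
  case (const c)
  then show ?case by (simp add: polys.const)
next
  case (join p q)
  then show ?case using polys.join[OF join.IH] by simp
next
  case (meet p q)
  then show ?case using polys.meet[OF meet.IH] by simp
qed

lemma polys_swap:
  assumes "p \<in> polys 2"
  shows "(\<lambda>xs. p [xs!1, xs!0]) \<in> polys 2"
proof -
  have "\<forall>i<2. (\<lambda>i xs. xs ! (1 - i)) i \<in> polys 2"
    by (auto intro: polys.proj)
  from polys_subst[OF assms this] show ?thesis
    by (simp add: numeral_2_eq_2)
qed

lemma polys_mono:
  "p \<in> polys n \<Longrightarrow> \<forall>i<n. xs!i \<le> ys!i \<Longrightarrow> p xs \<le> (p ys :: 'a::lattice)"
  by (induction rule: polys.induct) (fastforce intro: le_supI1 le_supI2 le_infI1 le_infI2)+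

lemma polys_preserve_tolerance:
  "p \<in> polys n \<Longrightarrow> tolerance T \<Longrightarrow> \<forall>i<n. (xs!i, ys!i) \<in> T \<Longrightarrow> (p xs, p ys) \<in> T"
  by (induction rule: polys.induct) (auto simp: tolerance_def refl_on_def)

lemma polys_foldr_sup:
  "\<forall>a\<in>set l. g a \<in> polys n \<Longrightarrow>
   (\<lambda>xs. foldr sup (map (\<lambda>a. g a xs) l) (bot::'a::bounded_lattice)) \<in> polys n"
  by (induction l) (auto intro: polys.const polys.join)

lemma polys_foldr_inf:
  "\<forall>a\<in>set l. g a \<in> polys n \<Longrightarrow>
   (\<lambda>xs. foldr inf (map (\<lambda>a. g a xs) l) (top::'a::bounded_lattice)) \<in> polys n"
  by (induction l) (auto intro: polys.const polys.meet)

lemma foldr_sup_upper: "a \<in> set l \<Longrightarrow> g a \<le> foldr sup (map g l) (bot::'a::bounded_lattice)"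
  by (induction l) (auto intro: le_supI2)

lemma foldr_sup_least: "\<forall>a\<in>set l. g a \<le> z \<Longrightarrow> foldr sup (map g l) (bot::'a::bounded_lattice) \<le> z"
  by (induction l) auto

lemma foldr_inf_lower: "a \<in> set l \<Longrightarrow> foldr inf (map g l) (top::'a::bounded_lattice) \<le> g a"
  by (induction l) (auto intro: le_infI2)

lemma foldr_inf_greatest: "\<forall>a\<in>set l. z \<le> g a \<Longrightarrow> z \<le> foldr inf (map g l) (top::'a::bounded_lattice)"
  by (induction l) auto

lemma pol01_imp_aggregation:
  assumes "pol01 n f"
  shows "aggregation n f"
proof -
  obtain p where p: "p \<in> polys n" "\<forall>xs. length xs = n \<longrightarrow> f xs = p xs"
    using assms unfolding pol01_def by blast
  have "f xs \<le> f ys" if "length xs = n" "length ys = n" "list_all2 (\<le>) xs ys" for xs ys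
    using polys_mono[OF p(1), of xs ys] p(2) that by (simp add: list_all2_conv_all_nth)
  then show ?thesis using assms unfolding aggregation_def pol01_def by blast
qed

definition threshold :: "'a::bounded_lattice \<Rightarrow> 'a \<Rightarrow> 'a" where
  "threshold c x = (if c \<le> x then top else bot)"

lemma aggregation_threshold:
  assumes "c \<noteq> bot"
  shows "aggregation 1 (\<lambda>xs. threshold c (xs!0))"
  using assms unfolding aggregation_def threshold_def
  by (auto simp: list_all2_conv_all_nth bot_unique intro: order_trans)

lemma monotone_is_poly_if_thresholds_are:
  fixes f :: "'a::{finite,bounded_lattice} list \<Rightarrow> 'a"
  assumes thr: "\<And>c. (\<lambda>ys. threshold (c::'a) (ys!0)) \<in> polys 1"
    and mono: "\<And>xs ys. length xs = n \<Longrightarrow> length ys = n \<Longrightarrow> list_all2 (\<le>) xs ys \<Longrightarrow> f xs \<le> f ys"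
  shows "\<exists>p\<in>polys n. \<forall>xs. length xs = n \<longrightarrow> f xs = p xs"
proof -
  have "finite {xs :: 'a list. set xs \<subseteq> UNIV \<and> length xs = n}"
    by (rule finite_lists_length_eq) simp
  then obtain As where As: "set As = {xs :: 'a list. length xs = n}"
    using finite_list by fastforce
  define above where "above a xs = foldr inf (map (\<lambda>i. threshold (a!i) (xs!i)) [0..<n]) top"
    for a xs :: "'a list"
  have above_poly: "above a \<in> polys n" for a
    unfolding above_def
  proof (intro polys_foldr_inf ballI)
    fix i assume "i \<in> set [0..<n]"
    then have "\<forall>j<1. (\<lambda>j xs. xs!i) j \<in> polys n" by (auto intro: polys.proj)
    from polys_subst[OF thr[of "a!i"] this] show "(\<lambda>xs. threshold (a!i) (xs!i)) \<in> polys n" by simp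
  qed
  have above_val: "above a xs = (if list_all2 (\<le>) a xs then top else bot)"
    if a: "length a = n" and xs: "length xs = n" for a xs
  proof (cases "list_all2 (\<le>) a xs")
    case True
    then have "top \<le> above a xs" using a xs unfolding above_def
      by (intro foldr_inf_greatest) (auto simp: threshold_def list_all2_conv_all_nth)
    then show ?thesis using True by (simp add: top_unique)
  next
    case False
    then obtain i where i: "i < n" "\<not> a!i \<le> xs!i"
      using a xs by (auto simp: list_all2_conv_all_nth)
    then have "above a xs \<le> threshold (a!i) (xs!i)"
      unfolding above_def by (intro foldr_inf_lower[where g = "\<lambda>i. threshold (a!i) (xs!i)"]) simp
    then show ?thesis using False i by (simp add: threshold_def bot_unique)
  qed
  define P where "P xs = foldr sup (map (\<lambda>a. inf (f a) (above a xs)) As) bot" for xs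
  have "P \<in> polys n" unfolding P_def
    by (rule polys_foldr_sup) (auto intro: polys.meet polys.const above_poly)
  moreover have "f xs = P xs" if xs: "length xs = n" for xs
  proof (rule antisym)
    have "inf (f xs) (above xs xs) \<le> P xs"
      unfolding P_def using As xs by (intro foldr_sup_upper[where g = "\<lambda>a. inf (f a) (above a xs)"]) simp
    then show "f xs \<le> P xs" using above_val[OF xs xs] by (simp add: list_all2_refl)
    show "P xs \<le> f xs" unfolding P_def
    proof (intro foldr_sup_least ballI)
      fix a assume "a \<in> set As"
      then have a: "length a = n" using As by simp
      show "inf (f a) (above a xs) \<le> f xs"
        using above_val[OF a xs] mono[OF a xs] by (auto intro: le_infI1)
    qed
  qed
  ultimately show ?thesis by blast
qed

lemma tolerance_UNIV_if_bot_top: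
  assumes "tolerance T" "(bot, top) \<in> T"
  shows "T = (UNIV :: ('a::bounded_lattice \<times> 'a) set)"
proof -
  have refl: "\<And>x. (x, x) \<in> T" and sym: "(top, bot) \<in> T"
    and comp: "\<And>a b c d. (a, b) \<in> T \<Longrightarrow> (c, d) \<in> T \<Longrightarrow> (sup a c, sup b d) \<in> T \<and> (inf a c, inf b d) \<in> T"
    using assms unfolding tolerance_def refl_on_def sym_def by blast+
  have "(x, y) \<in> T" for x y
  proof -
    have "(x, bot) \<in> T" using comp[OF sym refl[of x]] by simp
    moreover have "(bot, y) \<in> T" using comp[OF assms(2) refl[of y]] by simp
    ultimately show ?thesis using comp by fastforce
  qed
  then show ?thesis by auto
qed

lemma tolerance_strict_pair:
  assumes "tolerance T" "T \<noteq> Id"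
  obtains c d :: "'a::lattice" where "(c, d) \<in> T" "c < d"
proof -
  have refl: "\<And>x. (x, x) \<in> T" and sym: "\<And>x y. (x, y) \<in> T \<Longrightarrow> (y, x) \<in> T"
    and comp: "\<And>a b c d. (a, b) \<in> T \<Longrightarrow> (c, d) \<in> T \<Longrightarrow> (sup a c, sup b d) \<in> T"
    using assms(1) unfolding tolerance_def refl_on_def sym_def by blast+
  obtain a b where ab: "(a, b) \<in> T" "a \<noteq> b" using assms refl by auto
  have "(a, sup a b) \<in> T" using comp[OF ab(1) refl[of a]] by (simp add: sup_commute)
  moreover have "(b, a) \<in> T" using sym[OF ab(1)] .
  ultimately show ?thesis using that ab(2)
    by (metis sup.absorb_iff1 sup.cobounded1 order.not_eq_order_implies_strict)
qed

lemma tolerance_binary_poly_pairs: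
  "tolerance {(p [u, v], p [v, u]) | p. p \<in> polys 2}"
  (is "tolerance ?R")
proof -
  have "refl ?R"
    unfolding refl_on_def by (auto intro!: exI[of _ "\<lambda>xs. _"] polys.const)
  moreover have "sym ?R"
  proof (rule symI)
    fix a b assume "(a, b) \<in> ?R"
    then obtain p where "p \<in> polys 2" "a = p [u, v]" "b = p [v, u]" by blast
    then show "(b, a) \<in> ?R" by (auto intro!: exI[of _ "\<lambda>xs. p [xs!1, xs!0]"] polys_swap)
  qed
  moreover have "(sup a c, sup b d) \<in> ?R \<and> (inf a c, inf b d) \<in> ?R"
    if ab: "(a, b) \<in> ?R" and cd: "(c, d) \<in> ?R" for a b c d
  proof -
    obtain p where p: "p \<in> polys 2" "a = p [u, v]" "b = p [v, u]" using ab by blast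
    obtain q where q: "q \<in> polys 2" "c = q [u, v]" "d = q [v, u]" using cd by blast
    have "(sup a c, sup b d) \<in> ?R"
      using p q by (auto intro!: exI[of _ "\<lambda>xs. sup (p xs) (q xs)"] polys.join)
    moreover have "(inf a c, inf b d) \<in> ?R"
      using p q by (auto intro!: exI[of _ "\<lambda>xs. inf (p xs) (q xs)"] polys.meet)
    ultimately show ?thesis ..
  qed
  ultimately show ?thesis unfolding tolerance_def by blast
qed

context
  assumes trivial_tolerances: "\<forall>T :: ('a::bounded_lattice \<times> 'a) set. tolerance T \<longrightarrow> T = Id \<or> T = UNIV"
begin

lemma binary_poly_exchanging_bot_top:
  assumes "u \<noteq> (v::'a)"
  obtains p where "p \<in> polys 2" "p [u, v] = bot" "p [v, u] = top"
proof -
  let ?R = "{(p [u, v], p [v, u]) | p. p \<in> polys 2}"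
  have "(u, v) \<in> ?R" by (auto intro!: exI[of _ "\<lambda>xs. xs!0"] polys.proj)
  then have "?R = UNIV" using trivial_tolerances tolerance_binary_poly_pairs assms by blast
  then have "(bot, top) \<in> ?R" by simp
  then show ?thesis using that by force
qed

lemma unary_poly_separating:
  assumes "\<not> c \<le> (x::'a)"
  obtains q where "q \<in> polys 1" "q [x] = bot" "\<And>ys. c \<le> ys!0 \<Longrightarrow> q ys = top"
proof -
  have "x \<noteq> sup x c" using assms by (metis sup.cobounded2)
  then obtain p where p: "p \<in> polys 2" "p [x, sup x c] = bot" "p [sup x c, x] = top"
    by (rule binary_poly_exchanging_bot_top)
  have "\<forall>i<2::nat. (\<lambda>i. if i = 0 then (\<lambda>ys. sup (ys!0) x) else (\<lambda>ys. x)) i \<in> polys 1"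
    by (auto intro: polys.join polys.proj polys.const)
  from polys_subst[OF p(1) this] have q: "(\<lambda>ys. p [sup (ys!0) x, x]) \<in> polys 1"
    by (simp add: numeral_2_eq_2)
  have "p [x, x] \<le> p [x, sup x c]"
    by (rule polys_mono[OF p(1)]) (auto simp: less_2_cases_iff)
  then have "p [sup x x, x] = bot" using p(2) by (simp add: bot_unique)
  moreover have "p [sup (ys!0) x, x] = top" if "c \<le> ys!0" for ys
  proof -
    have "p [sup x c, x] \<le> p [sup (ys!0) x, x]"
      by (rule polys_mono[OF p(1)]) (auto simp: less_2_cases_iff that intro: le_supI1 le_supI2)
    then show ?thesis using p(3) by (simp add: top_unique)
  qed
  ultimately show ?thesis using that[OF q] by simp
qed

lemma threshold_poly:
  assumes "finite (UNIV :: 'a set)"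
  shows "(\<lambda>ys. threshold (c::'a) (ys!0)) \<in> polys 1"
proof -
  have "\<exists>q. \<not> c \<le> x \<longrightarrow> q \<in> polys 1 \<and> q [x] = bot \<and> (\<forall>ys. c \<le> ys!0 \<longrightarrow> q ys = top)" for x
  proof (cases "c \<le> x")
    case False
    from unary_poly_separating[OF False] show ?thesis by blast
  qed simp
  then obtain Q where Q: "\<And>x. \<not> c \<le> x \<Longrightarrow>
      Q x \<in> polys 1 \<and> Q x [x] = bot \<and> (\<forall>ys. c \<le> ys!0 \<longrightarrow> Q x ys = top)"
    by metis
  obtain es :: "'a list" where es: "set es = UNIV" using finite_list[OF assms] by blast
  define xl where "xl = filter (\<lambda>x. \<not> c \<le> x) es"
  define U where "U ys = foldr inf (map (\<lambda>x. Q x ys) xl) top" for ys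
  have "U \<in> polys 1" unfolding U_def
    by (rule polys_foldr_inf) (use Q in \<open>auto simp: xl_def\<close>)
  moreover have "U = (\<lambda>ys. threshold c (ys!0))"
  proof
    fix ys
    show "U ys = threshold c (ys!0)"
    proof (cases "c \<le> ys!0")
      case True
      then have "top \<le> U ys" unfolding U_def by (intro foldr_inf_greatest) (auto simp: xl_def Q)
      then show ?thesis using True by (simp add: threshold_def top_unique)
    next
      case False
      have "U ys \<le> Q (ys!0) ys"
        unfolding U_def using False es by (intro foldr_inf_lower) (auto simp: xl_def)
      also have "\<dots> \<le> Q (ys!0) [ys!0]"
        using Q[OF False] by (intro polys_mono[of _ 1]) auto
      finally show ?thesis using False Q by (simp add: threshold_def bot_unique)
    qed
  qed
  ultimately show ?thesis by simp
qed

end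

lemma tolerance_trivial_if_thresholds_are_polys:
  assumes thr: "\<And>d. d \<noteq> (bot::'a::bounded_lattice) \<Longrightarrow> \<exists>p\<in>polys 1. \<forall>xs. length xs = 1 \<longrightarrow> threshold d (xs!0) = p xs"
    and T: "tolerance (T :: ('a \<times> 'a) set)"
  shows "T = Id \<or> T = UNIV"
proof (cases "T = Id")
  case False
  obtain c d where cd: "(c, d) \<in> T" "c < d" using tolerance_strict_pair[OF T False] .
  then have "d \<noteq> bot" using bot.extremum_strict by blast
  from thr[OF this] obtain p where p: "p \<in> polys 1" "\<forall>xs. length xs = 1 \<longrightarrow> threshold d (xs!0) = p xs"
    by blast
  have "(p [c], p [d]) \<in> T" using polys_preserve_tolerance[OF p(1) T] cd(1) by simp
  moreover have "p [c] = bot" "p [d] = top"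
    using p(2)[rule_format, of "[c]"] p(2)[rule_format, of "[d]"] cd(2)
    by (auto simp: threshold_def less_le_not_le)
  ultimately have "(bot, top) \<in> T" by simp
  then show ?thesis using tolerance_UNIV_if_bot_top[OF T] by simp
qed simp

theorem mainTheorem5:
  fixes L :: "'a::{finite, bounded_lattice} itself"
  shows "(\<forall>n\<ge>1. \<forall>f :: 'a list \<Rightarrow> 'a. aggregation n f \<longleftrightarrow> pol01 n f)
    \<longleftrightarrow> (\<forall>T :: ('a \<times> 'a) set. tolerance T \<longrightarrow> T = Id \<or> T = UNIV)"
proof
  assume polys_complete: "\<forall>n\<ge>1. \<forall>f :: 'a list \<Rightarrow> 'a. aggregation n f \<longleftrightarrow> pol01 n f"
  have thr: "\<exists>p\<in>polys 1. \<forall>xs. length xs = 1 \<longrightarrow> threshold d (xs!0) = p xs"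
    if "d \<noteq> (bot::'a)" for d
  proof -
    have "pol01 1 (\<lambda>xs. threshold d (xs!0))"
      using polys_complete aggregation_threshold[OF that] by simp
    then show ?thesis unfolding pol01_def by (elim conjE)
  qed
  show "\<forall>T :: ('a \<times> 'a) set. tolerance T \<longrightarrow> T = Id \<or> T = UNIV"
    using tolerance_trivial_if_thresholds_are_polys[OF thr] by blast
next
  assume "\<forall>T :: ('a \<times> 'a) set. tolerance T \<longrightarrow> T = Id \<or> T = UNIV"
  then have "\<And>c. (\<lambda>ys. threshold (c::'a) (ys!0)) \<in> polys 1"
    by (rule threshold_poly[OF _ finite_UNIV])
  then have "aggregation n f \<Longrightarrow> pol01 n f" for n and f :: "'a list \<Rightarrow> 'a"
    using monotone_is_poly_if_thresholds_are[of n f]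
    unfolding aggregation_def pol01_def by blast
  then show "\<forall>n\<ge>1. \<forall>f :: 'a list \<Rightarrow> 'a. aggregation n f \<longleftrightarrow> pol01 n f"
    using pol01_imp_aggregation by blast
qed

end
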